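(* Let $X$ be a uniform space and let $(\mu_i)_{i\in I}$ be a net of Borel probability measures on $X$ which concentrates in $X$. Let $H$ be a uniformly equicontinuous, norm-bounded set of bounded uniformly continuous real-valued functions on $X$, and let $\epsilon>0$. Then $$\sup_{f\in H}\mu_i\bigl(\{x\in X : |f(x)-\mathbb E_{\mu_i}(f)|>\epsilon\}\bigr)\to 0 .$$
   Context: For an entourage $U$ of $X$ and $A\subseteq X$, $U[A]=\{y\in X:\exists x\in A,\ (x,y)\in U\}$. A net $(\mu_i)_{i\in I}$ of Borel probability measures on $X$ concentrates in $X$ if, whenever $(A_i)_{i\in I}$ are Borel subsets of $X$ with $\liminf_{i}\mu_i(A_i)>0$, one has $\lim_i\mu_i(U[A_i])=1$ for every open entourage $U$ of $X$. $\mathbb E_{\mu}(f)=\int f\,d\mu$. *)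

theory Defs
  imports "HOL-Probability.Probability"
begin

text \<open>Nets: indexed by a directed preordered type; "eventually along the net" is the
  filter generated by the tails.\<close>
definition directed :: "('i::preorder) itself \<Rightarrow> bool" where
  "directed _ \<longleftrightarrow> (\<forall>a b::'i. \<exists>c. a \<le> c \<and> b \<le> c)"

definition net_filter :: "('i::preorder) filter" where
  "net_filter = (INF k. principal {k..})"

definition entourage :: "('a::uniform_space \<times> 'a) set \<Rightarrow> bool" where
  "entourage U \<longleftrightarrow> eventually (\<lambda>p. p \<in> U) uniformity"

definition ent_image :: "('a \<times> 'a) set \<Rightarrow> 'a set \<Rightarrow> 'a set" where
  "ent_image U A = {y. \<exists>x\<in>A. (x, y) \<in> U}"

definition concentrates :: "('i::preorder \<Rightarrow> 'a::uniform_space measure) \<Rightarrow> bool" where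
  "concentrates \<mu> \<longleftrightarrow>
     (\<forall>A :: 'i \<Rightarrow> 'a set. (\<forall>i. A i \<in> sets borel) \<and>
        Liminf net_filter (\<lambda>i. ereal (measure (\<mu> i) (A i))) > 0 \<longrightarrow>
        (\<forall>U. open U \<and> entourage U \<longrightarrow>
           ((\<lambda>i. measure (\<mu> i) (ent_image U (A i))) \<longlongrightarrow> 1) net_filter))"

definition uniformly_equicontinuous :: "('a::uniform_space \<Rightarrow> real) set \<Rightarrow> bool" where
  "uniformly_equicontinuous H \<longleftrightarrow>
     (\<forall>e>0. \<exists>U. entourage U \<and> (\<forall>f\<in>H. \<forall>x y. (x, y) \<in> U \<longrightarrow> \<bar>f x - f y\<bar> < e))"

end

(*
  Fix a selection f i \<in> H.  As H is uniformly bounded, a grid of mesh e covers all values,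
  so some level set A i = {x. |f i x - a i| \<le> e} has measure bounded below uniformly in i.
  Concentration then makes the measure of U[A i] tend to 1 for an open entourage U on which
  every member of H oscillates by less than e.  On U[A i] the function f i is within 2e of
  a i, which eventually forces its mean within 3e of a i; so the set where f i deviates from
  its mean by more than 5e lies outside U[A i].  Applying this to a selection of near-worst
  members of H gives uniformity over H.
*)
theory Submission
  imports Defs
begin

lemma open_entourage_subset:
  fixes W :: "('a::uniform_space \<times> 'a) set"
  assumes "entourage W"
  shows "\<exists>U. open U \<and> entourage U \<and> U \<subseteq> W"
proof -
  have W: "eventually (\<lambda>p. p \<in> W) uniformity" using assms by (simp add: entourage_def)
  obtain D1 where D1: "eventually D1 uniformity" "\<And>x y z. D1 (x, y) \<Longrightarrow> D1 (y, z) \<Longrightarrow> (x, z) \<in> W"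
    using uniformity_transE[OF W] by blast
  obtain D2 where D2: "eventually D2 uniformity" "\<And>x y z. D2 (x, y) \<Longrightarrow> D2 (y, z) \<Longrightarrow> D1 (x, z)"
    using uniformity_transE[OF D1(1)] by blast
  define V where "V = (\<lambda>p. D2 p \<and> D2 (prod.swap p))"
  have "eventually (\<lambda>(x, y). D2 (y, x)) uniformity" using uniformity_sym[OF D2(1)] .
  then have V: "eventually V uniformity"
    using D2(1) unfolding V_def by (rule eventually_elim2) auto
  have "eventually (\<lambda>z. V (x, z)) (nhds x)" for x
  proof -
    have "eventually (\<lambda>(x', y). x' = x \<longrightarrow> V (x, y)) uniformity"
      using V by (rule eventually_mono) auto
    then show ?thesis by (simp add: eventually_nhds_uniformity)
  qed
  then obtain S where S: "\<And>x. open (S x)" "\<And>x. x \<in> S x" "\<And>x z. z \<in> S x \<Longrightarrow> V (x, z)"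
    unfolding eventually_nhds by metis
  \<comment> \<open>A union of open boxes containing V; each of its pairs is joined by three D2-steps.\<close>
  define U where "U = {(a, b). \<exists>x y. V (x, y) \<and> a \<in> S x \<and> b \<in> S y}"
  have "open U"
    unfolding open_prod_def
  proof
    fix p assume "p \<in> U"
    then obtain a b x y where p: "p = (a, b)" "V (x, y)" "a \<in> S x" "b \<in> S y"
      unfolding U_def by blast
    show "\<exists>A B. open A \<and> open B \<and> p \<in> A \<times> B \<and> A \<times> B \<subseteq> U"
      by (rule exI[of _ "S x"], rule exI[of _ "S y"]) (use p S in \<open>auto simp: U_def\<close>)
  qed
  moreover have "entourage U"
    unfolding entourage_def using V
    by (rule eventually_mono) (use S(2) in \<open>auto simp: U_def\<close>)
  moreover have "U \<subseteq> W"
  proof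
    fix p assume "p \<in> U"
    then obtain a b x y where p: "p = (a, b)" "V (x, y)" "a \<in> S x" "b \<in> S y"
      unfolding U_def by blast
    have "V (x, a)" "V (y, b)" using S(3) p by auto
    then have "D2 (a, x)" "D2 (x, y)" "D2 (y, b)" "D2 (b, b)"
      using p(2) uniformity_refl[OF D2(1)] by (auto simp: V_def)
    then have "D1 (a, y)" "D1 (y, b)" using D2(2) by blast+
    then show "p \<in> W" using D1(2) p by blast
  qed
  ultimately show ?thesis by blast
qed

lemma ent_image_mono: "U \<subseteq> V \<Longrightarrow> ent_image U A \<subseteq> ent_image V A"
  unfolding ent_image_def by blast

lemma (in prob_space) exists_large_member_of_finite_cover:
  assumes "finite I" "\<And>j. j \<in> I \<Longrightarrow> A j \<in> events" "space M \<subseteq> (\<Union>j\<in>I. A j)"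
  shows "\<exists>j\<in>I. prob (A j) \<ge> 1 / card I"
proof (rule ccontr)
  assume "\<not> ?thesis"
  then have small: "\<And>j. j \<in> I \<Longrightarrow> prob (A j) < 1 / card I" by auto
  have "I \<noteq> {}" using assms(3) not_empty by auto
  have "(\<Union>j\<in>I. A j) = space M"
    using assms(2,3) sets.sets_into_space by blast
  then have "1 = prob (\<Union>j\<in>I. A j)" by (simp add: prob_space)
  also have "\<dots> \<le> (\<Sum>j\<in>I. prob (A j))"
    using assms(1,2) by (rule measure_UNION_le) auto
  also have "\<dots> < (\<Sum>j\<in>I. 1 / card I)"
    using \<open>I \<noteq> {}\<close> assms(1) small by (intro sum_strict_mono) auto
  also have "\<dots> = 1" using \<open>I \<noteq> {}\<close> assms(1) by simp
  finally show False by simp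
qed

lemma exists_grid_point_near:
  fixes t C e :: real
  assumes "\<bar>t\<bar> \<le> C" "e > 0"
  shows "\<exists>j\<le>nat \<lceil>2 * C / e\<rceil>. \<bar>t - (- C + real j * e)\<bar> \<le> e"
proof -
  define j where "j = nat \<lfloor>(t + C) / e\<rfloor>"
  have "(t + C) / e \<ge> 0" using assms by auto
  then have "real j \<le> (t + C) / e" "(t + C) / e < real j + 1"
    unfolding j_def by (auto simp: of_nat_nat)
  then have "real j * e \<le> t + C" "t + C < real j * e + e"
    using assms(2) by (auto simp: field_simps)
  moreover have "j \<le> nat \<lceil>2 * C / e\<rceil>"
    unfolding j_def using assms
    by (intro nat_mono floor_le_ceiling[THEN order_trans]) (auto intro!: ceiling_mono divide_right_mono)
  ultimately show ?thesis by (intro exI[of _ j]) auto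
qed

lemma (in prob_space) exists_heavy_level_set:
  fixes g :: "'a \<Rightarrow> real" and C e :: real
  assumes "g \<in> borel_measurable M" "\<And>x. x \<in> space M \<Longrightarrow> \<bar>g x\<bar> \<le> C" "e > 0"
  shows "\<exists>a. \<bar>a\<bar> \<le> C + e \<and>
           prob {x\<in>space M. \<bar>g x - a\<bar> \<le> e} \<ge> 1 / (real (nat \<lceil>2 * C / e\<rceil>) + 1)"
proof -
  define K where "K = nat \<lceil>2 * C / e\<rceil>"
  define A where "A = (\<lambda>j::nat. {x\<in>space M. \<bar>g x - (- C + real j * e)\<bar> \<le> e})"
  have "space M \<subseteq> (\<Union>j\<in>{..K}. A j)"
    using exists_grid_point_near[OF assms(2) assms(3)] by (fastforce simp: A_def K_def)
  moreover have "A j \<in> events" for j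
    unfolding A_def using assms(1) by measurable
  ultimately obtain j where j: "j \<le> K" "prob (A j) \<ge> 1 / (real K + 1)"
    using exists_large_member_of_finite_cover[of "{..K}" A] by (auto simp: add.commute)
  have "C \<ge> 0" using assms(2) not_empty by (metis abs_ge_zero all_not_in_conv order_trans)
  then have "real K = of_int \<lceil>2 * C / e\<rceil>"
    unfolding K_def using assms(3) by simp
  also have "\<dots> \<le> 2 * C / e + 1" by (rule of_int_ceiling_le_add_one)
  finally have K: "real K \<le> 2 * C / e + 1" .
  have "real j * e \<le> real K * e" using j(1) assms(3) by (intro mult_right_mono) auto
  also have "\<dots> \<le> (2 * C / e + 1) * e" using K assms(3) by (intro mult_right_mono) auto
  also have "\<dots> = 2 * C + e" using assms(3) by (simp add: field_simps)
  finally have "real j * e \<le> 2 * C + e" .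
  moreover have "0 \<le> real j * e" using assms(3) by simp
  ultimately have "\<bar>- C + real j * e\<bar> \<le> C + e" using \<open>C \<ge> 0\<close> assms(3) unfolding abs_le_iff by linarith
  with j show ?thesis unfolding A_def K_def by blast
qed

lemma (in prob_space) integral_deviation_le:
  fixes g :: "'a \<Rightarrow> real"
  assumes "integrable M g" "G \<in> events" "r \<ge> 0"
    and "\<And>x. x \<in> G \<Longrightarrow> \<bar>g x - a\<bar> \<le> r"
    and "\<And>x. x \<in> space M \<Longrightarrow> \<bar>g x - a\<bar> \<le> D"
  shows "\<bar>expectation g - a\<bar> \<le> r + D * prob (space M - G)"
proof -
  have compl: "space M - G \<in> events" using assms(2) by auto
  have "\<bar>expectation g - a\<bar> = \<bar>expectation (\<lambda>x. g x - a)\<bar>"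
    using assms(1) by (simp add: prob_space)
  also have "\<dots> \<le> expectation (\<lambda>x. \<bar>g x - a\<bar>)"
    by (rule integral_abs_bound)
  also have "\<dots> \<le> expectation (\<lambda>x. r + D * indicator (space M - G) x)"
  proof (rule integral_mono)
    show "integrable M (\<lambda>x. r + D * indicator (space M - G) x)"
      using compl by (intro Bochner_Integration.integrable_add integrable_mult_right integrable_real_indicator)
         (auto simp: emeasure_eq_measure)
    show "\<bar>g x - a\<bar> \<le> r + D * indicator (space M - G) x" if "x \<in> space M" for x
      using that assms(3) assms(4,5)[of x] by (cases "x \<in> G") auto
  qed (use assms(1) in auto)
  also have "\<dots> = r + D * prob (space M - G)"
    using compl by (simp add: prob_space emeasure_eq_measure)
  finally show ?thesis .
qed

lemma concentrates_measure_tendsto_one: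
  fixes \<mu> :: "'i::preorder \<Rightarrow> 'a::uniform_space measure"
  assumes prob: "\<And>i. prob_space (\<mu> i)" and sets: "\<And>i. sets (\<mu> i) = sets borel"
    and conc: "concentrates \<mu>" and W: "entourage W"
    and A: "\<And>i. A i \<in> sets borel" and "c > 0" and A_large: "\<And>i. measure (\<mu> i) (A i) \<ge> c"
    and G: "\<And>i. G i \<in> sets borel" and AG: "\<And>i. ent_image W (A i) \<subseteq> G i"
  shows "((\<lambda>i. measure (\<mu> i) (G i)) \<longlongrightarrow> 1) net_filter"
proof -
  obtain U where U: "open U" "entourage U" "U \<subseteq> W"
    using open_entourage_subset[OF W] by blast
  have "ereal c \<le> Liminf net_filter (\<lambda>i. ereal (measure (\<mu> i) (A i)))"
    by (rule Liminf_bounded) (use A_large in auto)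
  then have "Liminf net_filter (\<lambda>i. ereal (measure (\<mu> i) (A i))) > 0"
    by (rule less_le_trans[rotated]) (use \<open>c > 0\<close> in auto)
  then have lim: "((\<lambda>i. measure (\<mu> i) (ent_image U (A i))) \<longlongrightarrow> 1) net_filter"
    using conc A U unfolding concentrates_def by blast
  have "measure (\<mu> i) (ent_image U (A i)) \<le> measure (\<mu> i) (G i)" for i
  proof (cases "ent_image U (A i) \<in> sets (\<mu> i)")
    case True
    interpret prob_space "\<mu> i" by (rule prob)
    show ?thesis
      using True ent_image_mono[OF U(3)] AG G sets by (intro finite_measure_mono) blast+
  qed (simp add: measure_notin_sets)
  moreover have "measure (\<mu> i) (G i) \<le> 1" for i
    using prob_space.prob_le_1[OF prob] .
  ultimately show ?thesis
    by (intro tendsto_sandwich[OF _ _ lim tendsto_const]) auto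
qed

lemma concentrates_deviation_tendsto_zero:
  fixes \<mu> :: "'i::preorder \<Rightarrow> 'a::uniform_space measure" and g :: "'i \<Rightarrow> 'a \<Rightarrow> real"
  assumes prob: "\<And>i. prob_space (\<mu> i)" and sets: "\<And>i. sets (\<mu> i) = sets borel"
    and conc: "concentrates \<mu>"
    and meas: "\<And>i. g i \<in> borel_measurable borel"
    and W: "entourage W" and Wg: "\<And>i x y. (x, y) \<in> W \<Longrightarrow> \<bar>g i x - g i y\<bar> < e"
    and C: "\<And>i x. \<bar>g i x\<bar> \<le> C" and e: "e > 0"
  shows "((\<lambda>i. measure (\<mu> i) {x. \<bar>g i x - integral\<^sup>L (\<mu> i) (g i)\<bar> > 5 * e}) \<longlongrightarrow> 0) net_filter"
proof -
  have sp: "\<And>i. space (\<mu> i) = UNIV"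
    using sets_eq_imp_space_eq[OF sets] by simp
  have gm: "\<And>i. g i \<in> borel_measurable (\<mu> i)"
    using meas by (simp add: measurable_cong_sets[OF sets refl])
  define c where "c = 1 / (real (nat \<lceil>2 * C / e\<rceil>) + 1)"
  have "\<forall>i. \<exists>a. \<bar>a\<bar> \<le> C + e \<and> measure (\<mu> i) {x. \<bar>g i x - a\<bar> \<le> e} \<ge> c"
    using prob_space.exists_heavy_level_set[OF prob gm C e] by (simp add: sp c_def)
  then obtain a where a: "\<And>i. \<bar>a i\<bar> \<le> C + e" "\<And>i. measure (\<mu> i) {x. \<bar>g i x - a i\<bar> \<le> e} \<ge> c"
    by metis
  define G where "G i = {x. \<bar>g i x - a i\<bar> < 2 * e}" for i
  have G: "G i \<in> sets borel" for i
    unfolding G_def using meas by measurable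
  have "ent_image W {x. \<bar>g i x - a i\<bar> \<le> e} \<subseteq> G i" for i
    unfolding ent_image_def G_def using Wg[of _ _ i] by fastforce
  then have G_lim: "((\<lambda>i. measure (\<mu> i) (G i)) \<longlongrightarrow> 1) net_filter"
    using concentrates_measure_tendsto_one[OF prob sets conc W _ _ a(2) G] meas e
    by (auto simp: c_def)
  define p where "p i = measure (\<mu> i) (UNIV - G i)" for i
  have p_eq: "p i = 1 - measure (\<mu> i) (G i)" for i
    unfolding p_def using prob_space.prob_compl[OF prob, of "G i" i] sp G sets by simp
  have p: "(p \<longlongrightarrow> 0) net_filter"
    unfolding p_eq using tendsto_diff[OF tendsto_const G_lim, of 1] by simp
  have dev: "\<bar>integral\<^sup>L (\<mu> i) (g i) - a i\<bar> \<le> 2 * e + (2 * C + e) * p i" for i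
  proof -
    interpret prob_space "\<mu> i" by (rule prob)
    have "integrable (\<mu> i) (g i)"
      using gm C by (intro integrable_const_bound[where B = C]) auto
    moreover have "\<bar>g i x - a i\<bar> \<le> 2 * C + e" for x
      using C[of i x] a(1)[of i] by (auto simp: abs_le_iff)
    ultimately show ?thesis
      using G sets e unfolding p_def sp[of i, symmetric]
      by (intro integral_deviation_le) (auto simp: G_def)
  qed
  have "eventually (\<lambda>i. (2 * C + e) * p i < e) net_filter"
    using tendsto_mult[OF tendsto_const p, of "2 * C + e"] e by (auto intro: order_tendstoD)
  then have "eventually (\<lambda>i. measure (\<mu> i) {x. \<bar>g i x - integral\<^sup>L (\<mu> i) (g i)\<bar> > 5 * e} \<le> p i)
      net_filter"
  proof (rule eventually_mono)
    fix i assume small: "(2 * C + e) * p i < e"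
    interpret prob_space "\<mu> i" by (rule prob)
    have "{x. \<bar>g i x - integral\<^sup>L (\<mu> i) (g i)\<bar> > 5 * e} \<subseteq> UNIV - G i"
      using dev[of i] small by (auto simp: G_def abs_le_iff abs_less_iff)
    then show "measure (\<mu> i) {x. \<bar>g i x - integral\<^sup>L (\<mu> i) (g i)\<bar> > 5 * e} \<le> p i"
      unfolding p_def using G sets by (intro finite_measure_mono) auto
  qed
  then show ?thesis
    by (rule tendsto_sandwich[rotated, OF _ tendsto_const p]) auto
qed

lemma tendsto_SUP_zero_of_selections:
  fixes \<phi> :: "'i \<Rightarrow> 'b \<Rightarrow> real"
  assumes "\<And>s. (\<And>i. s i \<in> H) \<Longrightarrow> ((\<lambda>i. \<phi> i (s i)) \<longlongrightarrow> 0) F"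
  shows "((\<lambda>i. SUP f\<in>H. ennreal (\<phi> i f)) \<longlongrightarrow> 0) F"
proof (cases "H = {}")
  case True
  then show ?thesis by (simp add: bot_ennreal)
next
  case False
  show ?thesis
  proof (rule order_tendstoI)
    fix y :: ennreal assume "0 < y"
    then obtain b where b: "0 < b" "b < y" using dense by blast
    define \<delta> where "\<delta> = enn2real b"
    have "b < top" using b(2) top.not_eq_extremum by fastforce
    then have \<delta>: "0 < \<delta>" "ennreal \<delta> = b"
      using b(1) by (auto simp: \<delta>_def enn2real_positive_iff)
    \<comment> \<open>At each index select a member of H exceeding \<delta> whenever one exists.\<close>
    have "\<forall>i. \<exists>f\<in>H. (\<forall>f'\<in>H. \<phi> i f' \<le> \<delta>) \<or> \<phi> i f > \<delta>"
      using False by (metis ex_in_conv not_le)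
    then obtain s where s: "\<And>i. s i \<in> H" "\<And>i. (\<forall>f\<in>H. \<phi> i f \<le> \<delta>) \<or> \<phi> i (s i) > \<delta>"
      by metis
    have "eventually (\<lambda>i. \<phi> i (s i) < \<delta>) F"
      using assms[OF s(1)] \<delta>(1) by (rule order_tendstoD)
    then show "eventually (\<lambda>i. (SUP f\<in>H. ennreal (\<phi> i f)) < y) F"
    proof (rule eventually_mono)
      fix i assume "\<phi> i (s i) < \<delta>"
      then have "(SUP f\<in>H. ennreal (\<phi> i f)) \<le> ennreal \<delta>"
        using s(2)[of i] by (auto intro!: SUP_least ennreal_leI)
      then show "(SUP f\<in>H. ennreal (\<phi> i f)) < y" using \<delta>(2) b(2) by simp
    qed
  qed simp
qed

theorem corollary3p7:
  fixes \<mu> :: "'i::preorder \<Rightarrow> 'a::uniform_space measure"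
    and H :: "('a \<Rightarrow> real) set" and \<epsilon> :: real
  assumes "directed TYPE('i)"
    and "\<And>i. prob_space (\<mu> i)"
    and "\<And>i. sets (\<mu> i) = sets borel"
    and "concentrates \<mu>"
    and "\<And>f. f \<in> H \<Longrightarrow> uniformly_continuous_on UNIV f"
    and "\<And>f. f \<in> H \<Longrightarrow> bounded (range f)"
    and "uniformly_equicontinuous H"
    and "\<exists>C. \<forall>f\<in>H. \<forall>x. \<bar>f x\<bar> \<le> C"
    and "\<epsilon> > 0"
  shows "((\<lambda>i. SUP f\<in>H. emeasure (\<mu> i) {x. \<bar>f x - integral\<^sup>L (\<mu> i) f\<bar> > \<epsilon>}) \<longlongrightarrow> 0)
           net_filter"
proof -
  obtain C where C: "\<And>f x. f \<in> H \<Longrightarrow> \<bar>f x\<bar> \<le> C"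
    using assms(8) by blast
  have "\<epsilon> / 5 > 0" using assms(9) by simp
  then obtain W where W: "entourage W"
    and W_close: "\<And>f x y. f \<in> H \<Longrightarrow> (x, y) \<in> W \<Longrightarrow> \<bar>f x - f y\<bar> < \<epsilon> / 5"
    using assms(7) unfolding uniformly_equicontinuous_def by blast
  have "((\<lambda>i. SUP f\<in>H. ennreal (measure (\<mu> i) {x. \<bar>f x - integral\<^sup>L (\<mu> i) f\<bar> > \<epsilon>})) \<longlongrightarrow> 0)
          net_filter"
  proof (rule tendsto_SUP_zero_of_selections)
    fix s :: "'i \<Rightarrow> 'a \<Rightarrow> real" assume s: "\<And>i. s i \<in> H"
    have "s i \<in> borel_measurable borel" for i
      using assms(5)[OF s] by (intro borel_measurable_continuous_onI uniformly_continuous_imp_continuous)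
    from concentrates_deviation_tendsto_zero[OF assms(2-4) this W W_close[OF s] C[OF s]] assms(9)
    show "((\<lambda>i. measure (\<mu> i) {x. \<bar>s i x - integral\<^sup>L (\<mu> i) (s i)\<bar> > \<epsilon>}) \<longlongrightarrow> 0) net_filter"
      by simp
  qed
  then show ?thesis
    by (simp add: finite_measure.emeasure_eq_measure[OF prob_space.finite_measure[OF assms(2)]])
qed

end
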